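(* Let $(\mathfrak g,[\cdot,\cdot],\alpha,\varepsilon,B)$ be a quadratic multiplicative color Hom-Lie algebra, $\rho$ a faithful representation of $\mathfrak g$ on $(M,\beta)$ with $\alpha^2=\mathrm{id}$ and $\beta^2=\mathrm{id}$, and assume that $\tilde\rho$, $\tilde\rho(x)(f)=-\varepsilon(x,f)\,f\circ\rho(x)$, is a representation of $\mathfrak g$ on $(M^*,\tilde\beta)$, $\tilde\beta(f)=f\circ\beta$. Let $\mathscr D:M\otimes M^*\to\mathfrak g$ be the even linear map with $B(x,\mathscr D(m\otimes f))=\langle\rho(\alpha(x))(m),f\rangle$ for all $x\in\mathfrak g$, where $\langle n,f\rangle=\varepsilon(n,f)f(n)$. Define on $M\otimes M^*$ the bracket $[m\otimes f,m'\otimes f']=\rho(\mathscr D(m\otimes f))(m')\otimes\tilde\beta(f')+\varepsilon(m+f,m')\,\beta(m')\otimes\tilde\rho(\mathscr D(m\otimes f))(f')$ and $\tau=\beta\otimes\tilde\beta$. Then $(M\otimes M^*,[\cdot,\cdot],\tau,\varepsilon)$ is a color Hom-Leibniz algebra, i.e. for all homogeneous $u,v,w\in M\otimes M^*$: $[\tau(u),[v,w]]=[[u,v],\tau(w)]+\varepsilon(u,v)[\tau(v),[u,w]]$.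
   Context: $\mathbb K$ is a field of characteristic zero and $\Gamma$ an abelian group. A bicharacter is a map $\varepsilon:\Gamma\times\Gamma\to\mathbb K\setminus\{0\}$ with $\varepsilon(a,b)\varepsilon(b,a)=1$, $\varepsilon(a,b+c)=\varepsilon(a,b)\varepsilon(a,c)$, $\varepsilon(a+b,c)=\varepsilon(a,c)\varepsilon(b,c)$; for homogeneous elements $\varepsilon(x,y)=\varepsilon(\deg x,\deg y)$. A color Hom-Lie algebra $(\mathfrak g,[\cdot,\cdot],\alpha,\varepsilon)$: $\Gamma$-graded space, even bilinear bracket, even linear $\alpha$, with $[x,y]=-\varepsilon(x,y)[y,x]$ and $\varepsilon(z,x)[\alpha(x),[y,z]]+\varepsilon(x,y)[\alpha(y),[z,x]]+\varepsilon(y,z)[\alpha(z),[x,y]]=0$; multiplicative means $\alpha([x,y])=[\alpha(x),\alpha(y)]$; quadratic means equipped with a nondegenerate $\varepsilon$-symmetric invariant ($B([x,y],z)=B(x,[y,z])$) bilinear form $B$ with $B(\alpha(x),y)=B(x,\alpha(y))$. A representation of a multiplicative $\mathfrak g$ on $(M,\beta)$ is an even linear $\rho:\mathfrak g\to\mathfrak{gl}(M)$ with $\rho([x,y])\circ\beta=\rho(\alpha(x))\circ\rho(y)-\varepsilon(x,y)\rho(\alpha(y))\circ\rho(x)$ and $\beta\circ\rho(x)=\rho(\alpha(x))\circ\beta$; faithful means $\rho$ injective. $M^*$ is the graded dual; $M\otimes M^*$ is graded by total degree. *)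

theory Defs
  imports Complex_Main "HOL-Library.Function_Algebras"
begin

definition bichar :: "('c::ab_group_add \<Rightarrow> 'c \<Rightarrow> 'k::field) \<Rightarrow> bool" where
  "bichar eps \<longleftrightarrow> (\<forall>a b. eps a b \<noteq> 0) \<and> (\<forall>a b. eps a b * eps b a = 1) \<and>
     (\<forall>a b c. eps a (b + c) = eps a b * eps a c) \<and>
     (\<forall>a b c. eps (a + b) c = eps a c * eps b c)"

definition lin_on :: "('k \<Rightarrow> 'v::ab_group_add \<Rightarrow> 'v) \<Rightarrow> 'v set \<Rightarrow>
    ('k \<Rightarrow> 'w::ab_group_add \<Rightarrow> 'w) \<Rightarrow> 'w set \<Rightarrow> ('v \<Rightarrow> 'w) \<Rightarrow> bool" where
  "lin_on sV V sW W f \<longleftrightarrow> (\<forall>x\<in>V. f x \<in> W) \<and> (\<forall>x\<in>V. \<forall>y\<in>V. f (x + y) = f x + f y) \<and>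
     (\<forall>c. \<forall>x\<in>V. f (sV c x) = sW c (f x))"

definition graded_on :: "('k::field \<Rightarrow> 'v::ab_group_add \<Rightarrow> 'v) \<Rightarrow> 'v set \<Rightarrow> ('c \<Rightarrow> 'v set) \<Rightarrow> bool" where
  "graded_on s W V \<longleftrightarrow> vector_space s \<and> module.subspace s W \<and>
     (\<forall>a. module.subspace s (V a) \<and> V a \<subseteq> W) \<and>
     (\<forall>x\<in>W. \<exists>!h. finite {a. h a \<noteq> 0} \<and> (\<forall>a. h a \<in> V a) \<and> x = (\<Sum>a\<in>{a. h a \<noteq> 0}. h a))"

definition color_hom_lie :: "('k::field \<Rightarrow> 'g::ab_group_add \<Rightarrow> 'g) \<Rightarrow> ('c::ab_group_add \<Rightarrow> 'g set) \<Rightarrow>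
    ('g \<Rightarrow> 'g \<Rightarrow> 'g) \<Rightarrow> ('g \<Rightarrow> 'g) \<Rightarrow> ('c \<Rightarrow> 'c \<Rightarrow> 'k) \<Rightarrow> bool" where
  "color_hom_lie s G br al eps \<longleftrightarrow> graded_on s UNIV G \<and> bichar eps \<and>
     (\<forall>x. Vector_Spaces.linear s s (br x)) \<and> (\<forall>y. Vector_Spaces.linear s s (\<lambda>x. br x y)) \<and>
     (\<forall>a b. \<forall>x\<in>G a. \<forall>y\<in>G b. br x y \<in> G (a + b)) \<and>
     Vector_Spaces.linear s s al \<and> (\<forall>a. \<forall>x\<in>G a. al x \<in> G a) \<and>
     (\<forall>a b. \<forall>x\<in>G a. \<forall>y\<in>G b. br x y = - s (eps a b) (br y x)) \<and>
     (\<forall>a b c. \<forall>x\<in>G a. \<forall>y\<in>G b. \<forall>z\<in>G c.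
        s (eps c a) (br (al x) (br y z)) + s (eps a b) (br (al y) (br z x))
        + s (eps b c) (br (al z) (br x y)) = 0)"

definition multiplicative :: "('g \<Rightarrow> 'g \<Rightarrow> 'g) \<Rightarrow> ('g \<Rightarrow> 'g) \<Rightarrow> bool" where
  "multiplicative br al \<longleftrightarrow> (\<forall>x y. al (br x y) = br (al x) (al y))"

definition quadratic_form :: "('k::field \<Rightarrow> 'g::ab_group_add \<Rightarrow> 'g) \<Rightarrow> ('c \<Rightarrow> 'g set) \<Rightarrow>
    ('g \<Rightarrow> 'g \<Rightarrow> 'g) \<Rightarrow> ('g \<Rightarrow> 'g) \<Rightarrow> ('c \<Rightarrow> 'c \<Rightarrow> 'k) \<Rightarrow> ('g \<Rightarrow> 'g \<Rightarrow> 'k) \<Rightarrow> bool" where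
  "quadratic_form s G br al eps B \<longleftrightarrow>
     (\<forall>x. Vector_Spaces.linear s (*) (B x)) \<and> (\<forall>y. Vector_Spaces.linear s (*) (\<lambda>x. B x y)) \<and>
     (\<forall>x. (\<forall>y. B x y = 0) \<longrightarrow> x = 0) \<and>
     (\<forall>a b. \<forall>x\<in>G a. \<forall>y\<in>G b. B x y = eps a b * B y x) \<and>
     (\<forall>x y z. B (br x y) z = B x (br y z)) \<and>
     (\<forall>x y. B (al x) y = B x (al y))"

definition color_hom_rep :: "('k::field \<Rightarrow> 'g::ab_group_add \<Rightarrow> 'g) \<Rightarrow> ('c::ab_group_add \<Rightarrow> 'g set) \<Rightarrow>
    ('g \<Rightarrow> 'g \<Rightarrow> 'g) \<Rightarrow> ('g \<Rightarrow> 'g) \<Rightarrow> ('c \<Rightarrow> 'c \<Rightarrow> 'k) \<Rightarrow>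
    ('k \<Rightarrow> 'v::ab_group_add \<Rightarrow> 'v) \<Rightarrow> 'v set \<Rightarrow> ('c \<Rightarrow> 'v set) \<Rightarrow>
    ('g \<Rightarrow> 'v \<Rightarrow> 'v) \<Rightarrow> ('v \<Rightarrow> 'v) \<Rightarrow> bool" where
  "color_hom_rep s G br al eps sM Mc MV rho be \<longleftrightarrow>
     (\<forall>x. lin_on sM Mc sM Mc (rho x)) \<and>
     (\<forall>c x y. \<forall>m\<in>Mc. rho (s c x + y) m = sM c (rho x m) + rho y m) \<and>
     (\<forall>a b. \<forall>x\<in>G a. \<forall>m\<in>MV b. rho x m \<in> MV (a + b)) \<and>
     lin_on sM Mc sM Mc be \<and> (\<forall>a. \<forall>m\<in>MV a. be m \<in> MV a) \<and>
     (\<forall>a b. \<forall>x\<in>G a. \<forall>y\<in>G b. \<forall>m\<in>Mc.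
        rho (br x y) (be m) = rho (al x) (rho y m) - sM (eps a b) (rho (al y) (rho x m))) \<and>
     (\<forall>x. \<forall>m\<in>Mc. be (rho x m) = rho (al x) (be m))"

definition dscale :: "'k::field \<Rightarrow> ('m \<Rightarrow> 'k) \<Rightarrow> ('m \<Rightarrow> 'k)" where
  "dscale c f = (\<lambda>n. c * f n)"

definition dual_deg :: "('k::field \<Rightarrow> 'm::ab_group_add \<Rightarrow> 'm) \<Rightarrow> ('c::ab_group_add \<Rightarrow> 'm set) \<Rightarrow>
    'c \<Rightarrow> ('m \<Rightarrow> 'k) set" where
  "dual_deg sM MV d = {f. Vector_Spaces.linear sM (*) f \<and> (\<forall>a. a \<noteq> - d \<longrightarrow> (\<forall>n\<in>MV a. f n = 0))}"

definition gdual :: "('k::field \<Rightarrow> 'm::ab_group_add \<Rightarrow> 'm) \<Rightarrow> ('c::ab_group_add \<Rightarrow> 'm set) \<Rightarrow>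
    ('m \<Rightarrow> 'k) set" where
  "gdual sM MV = module.span dscale (\<Union>d. dual_deg sM MV d)"

definition is_tensor :: "('k::field \<Rightarrow> 'a::ab_group_add \<Rightarrow> 'a) \<Rightarrow> 'a set \<Rightarrow>
    ('k \<Rightarrow> 'b::ab_group_add \<Rightarrow> 'b) \<Rightarrow> 'b set \<Rightarrow>
    ('k \<Rightarrow> 't::ab_group_add \<Rightarrow> 't) \<Rightarrow> ('a \<Rightarrow> 'b \<Rightarrow> 't) \<Rightarrow> bool" where
  "is_tensor sA A sB Bc sT tens \<longleftrightarrow> vector_space sT \<and>
     (\<forall>b\<in>Bc. lin_on sA A sT UNIV (\<lambda>a. tens a b)) \<and> (\<forall>a\<in>A. lin_on sB Bc sT UNIV (tens a)) \<and>
     module.span sT {tens a b | a b. a \<in> A \<and> b \<in> Bc} = UNIV \<and>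
     (\<forall>h :: 'a \<Rightarrow> 'b \<Rightarrow> 'k.
        (\<forall>b\<in>Bc. lin_on sA A (*) UNIV (\<lambda>a. h a b)) \<and> (\<forall>a\<in>A. lin_on sB Bc (*) UNIV (h a)) \<longrightarrow>
        (\<exists>\<phi>. Vector_Spaces.linear sT (*) \<phi> \<and> (\<forall>a\<in>A. \<forall>b\<in>Bc. \<phi> (tens a b) = h a b)))"

definition tensor_deg :: "('k::field \<Rightarrow> 'm::ab_group_add \<Rightarrow> 'm) \<Rightarrow> ('c::ab_group_add \<Rightarrow> 'm set) \<Rightarrow>
    ('k \<Rightarrow> 't::ab_group_add \<Rightarrow> 't) \<Rightarrow> ('m \<Rightarrow> ('m \<Rightarrow> 'k) \<Rightarrow> 't) \<Rightarrow> 'c \<Rightarrow> 't set" where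
  "tensor_deg sM MV sT tens c = module.span sT
     {tens m f | m f a b. a + b = c \<and> m \<in> MV a \<and> f \<in> dual_deg sM MV b}"

end

theory Submission
  imports Defs
begin

text \<open>
  The whole argument rests on the equivariance of \<open>D\<close>: \<open>D (\<tau> t) = \<alpha> (D t)\<close>, and
  \<open>D (x \<cdot> (m \<otimes> f)) = [x, D (m \<otimes> f)]\<close> for the twisted action
  \<open>x \<cdot> (m \<otimes> f) = \<rho>(x) m \<otimes> \<tilde>\<beta> f + \<epsilon>(x, m) \<beta> m \<otimes> \<tilde>\<rho>(x) f\<close>.
  Both identities are checked against every homogeneous \<open>y\<close> through the nondegenerate
  form \<open>B\<close>, using its invariance and the representation identity for \<open>\<rho>\<close>.  Since
  \<open>[t, t'] = D(t) \<cdot> t'\<close>, equivariance turns \<open>[[u, v], \<tau> w]\<close> into an action of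
  \<open>[D u, D v]\<close>; the representation identities for \<open>\<rho>\<close> and \<open>\<tilde>\<rho>\<close> split it into the
  four terms that occur in \<open>[\<tau> u, [v, w]] - \<epsilon>(u, v) [\<tau> v, [u, w]]\<close>.
  Multilinearity then extends the identity from pure tensors to homogeneous elements.
\<close>

lemma bichar_add_left: "bichar eps \<Longrightarrow> eps (a + b) c = eps a c * eps b c"
  by (simp add: bichar_def)

lemma bichar_add_right: "bichar eps \<Longrightarrow> eps a (b + c) = eps a b * eps a c"
  by (simp add: bichar_def)

lemma bichar_swap: "bichar eps \<Longrightarrow> eps a b * eps b a = 1"
  by (simp add: bichar_def)

lemma quadratic_form_homogeneous_eqI:
  assumes lie: "color_hom_lie s G br al eps" and quad: "quadratic_form s G br al eps B"
    and z: "z \<in> G e" and z': "z' \<in> G e" and eq: "\<And>r y. y \<in> G r \<Longrightarrow> B y z = B y z'"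
  shows "z = z'"
proof -
  interpret vector_space s
    using lie by (simp add: color_hom_lie_def graded_on_def)
  interpret B_right: module_hom s "(*)" "B x" for x
    using quad by (simp add: quadratic_form_def module_hom_iff_linear)
  have "subspace (G e)"
    using lie by (simp add: color_hom_lie_def graded_on_def)
  then have zz': "z - z' \<in> G e"
    using z z' by (rule subspace_diff)
  have "B (z - z') y = 0" for y
  proof -
    obtain h where h: "\<forall>a. h a \<in> G a" "y = (\<Sum>a\<in>{a. h a \<noteq> 0}. h a)"
      using lie unfolding color_hom_lie_def graded_on_def by (metis UNIV_I ex1_implies_ex)
    have "B (z - z') (h a) = eps e a * B (h a) (z - z')" for a
      using quad zz' h(1) by (simp add: quadratic_form_def)
    then have "B (z - z') (h a) = 0" for a
      using eq[OF h(1)[rule_format]] by (simp add: B_right.diff)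
    then show ?thesis
      by (simp add: h(2) B_right.sum)
  qed
  then have "z - z' = 0"
    using quad unfolding quadratic_form_def by blast
  then show ?thesis
    by simp
qed

text \<open>The shape of the Hom-Leibniz identity on pure tensors: the mixed terms \<open>C1\<close>, \<open>C2\<close> cancel,
  and \<open>T1 - e T2\<close>, \<open>T3 - e T4\<close> are the representation identities for \<open>\<rho>\<close> and \<open>\<tilde>\<rho>\<close>.\<close>

lemma (in module) leibniz_rearrange:
  assumes "L = T1 + scale (e * k3) C1 + scale (e * k6) (C2 + scale k3 T3)"
    and "R = T2 + scale k6 C2 + scale k3 (C1 + scale (e * k6) T4)"
    and "M = T1 - scale e T2 + scale (e * k6 * k3) (T3 - scale e T4)"
  shows "L = M + scale e R"
  unfolding assms by (simp add: scale_right_distrib scale_right_diff_distrib algebra_simps)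

locale tensor_hom_leibniz =
  fixes s :: "'k::field_char_0 \<Rightarrow> 'g::ab_group_add \<Rightarrow> 'g"
    and G :: "'c::ab_group_add \<Rightarrow> 'g set"
    and br :: "'g \<Rightarrow> 'g \<Rightarrow> 'g" and al :: "'g \<Rightarrow> 'g"
    and eps :: "'c \<Rightarrow> 'c \<Rightarrow> 'k" and B :: "'g \<Rightarrow> 'g \<Rightarrow> 'k"
    and sM :: "'k \<Rightarrow> 'm::ab_group_add \<Rightarrow> 'm" and MV :: "'c \<Rightarrow> 'm set"
    and rho :: "'g \<Rightarrow> 'm \<Rightarrow> 'm" and be :: "'m \<Rightarrow> 'm"
    and rhot :: "'g \<Rightarrow> ('m \<Rightarrow> 'k) \<Rightarrow> ('m \<Rightarrow> 'k)"
    and sT :: "'k \<Rightarrow> 't::ab_group_add \<Rightarrow> 't" and tens :: "'m \<Rightarrow> ('m \<Rightarrow> 'k) \<Rightarrow> 't"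
    and D :: "'t \<Rightarrow> 'g" and brT :: "'t \<Rightarrow> 't \<Rightarrow> 't" and tau :: "'t \<Rightarrow> 't"
  assumes lie: "color_hom_lie s G br al eps"
    and mult: "multiplicative br al"
    and quad: "quadratic_form s G br al eps B"
    and rep: "color_hom_rep s G br al eps sM UNIV MV rho be"
    and al_inv: "\<forall>x. al (al x) = x"
    and be_inv: "\<forall>m. be (be m) = m"
    and rhot_hom: "\<forall>a d. \<forall>x\<in>G a. \<forall>f\<in>dual_deg sM MV d.
                     rhot x f = dscale (- eps a d) (f \<circ> rho x)"
    and rhot_lin: "\<forall>x. lin_on dscale (gdual sM MV) dscale (gdual sM MV) (rhot x)"
    and rhot_linx: "\<forall>c x y. \<forall>f\<in>gdual sM MV. rhot (s c x + y) f = dscale c (rhot x f) + rhot y f"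
    and rhot_rep: "color_hom_rep s G br al eps dscale (gdual sM MV) (dual_deg sM MV) rhot (\<lambda>f. f \<circ> be)"
    and tensor: "is_tensor sM UNIV dscale (gdual sM MV) sT tens"
    and D_lin: "Vector_Spaces.linear sT s D"
    and D_even: "\<forall>c. \<forall>u\<in>tensor_deg sM MV sT tens c. D u \<in> G c"
    and D_def: "\<forall>a b d. \<forall>x\<in>G a. \<forall>m\<in>MV b. \<forall>f\<in>dual_deg sM MV d.
                  B x (D (tens m f)) = eps (a + b) d * f (rho (al x) m)"
    and brT_lin1: "\<forall>v. Vector_Spaces.linear sT sT (\<lambda>u. brT u v)"
    and brT_lin2: "\<forall>u. Vector_Spaces.linear sT sT (brT u)"
    and brT_def: "\<forall>a b a' b'. \<forall>m\<in>MV a. \<forall>f\<in>dual_deg sM MV b. \<forall>m'\<in>MV a'. \<forall>f'\<in>dual_deg sM MV b'.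
                   brT (tens m f) (tens m' f') =
                     tens (rho (D (tens m f)) m') (f' \<circ> be)
                     + sT (eps (a + b) a') (tens (be m') (rhot (D (tens m f)) f'))"
    and tau_lin: "Vector_Spaces.linear sT sT tau"
    and tau_def: "\<forall>m. \<forall>f\<in>gdual sM MV. tau (tens m f) = tens (be m) (f \<circ> be)"
begin

abbreviation "GD \<equiv> gdual sM MV"
abbreviation "DD \<equiv> dual_deg sM MV"
abbreviation "TD \<equiv> tensor_deg sM MV sT tens"

interpretation S: vector_space s
  using lie by (simp add: color_hom_lie_def graded_on_def)
interpretation T: vector_space sT
  using tensor by (simp add: is_tensor_def)
interpretation F: module dscale
  by unfold_locales (auto simp: dscale_def algebra_simps)
interpretation D: module_hom sT s D
  using D_lin by (rule module_hom_linearI)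
interpretation tau: module_hom sT sT tau
  using tau_lin by (rule module_hom_linearI)
interpretation brT_left: module_hom sT sT "\<lambda>u. brT u v" for v
  using brT_lin1 by (simp add: module_hom_iff_linear)
interpretation brT_right: module_hom sT sT "brT u" for u
  using brT_lin2 by (simp add: module_hom_iff_linear)

lemma B_add_right: "B x (y + z) = B x y + B x z"
  and B_scale_right: "B x (s c y) = c * B x y"
  using quad unfolding quadratic_form_def Vector_Spaces.linear_iff by blast+

lemma bichar: "bichar eps"
  using lie unfolding color_hom_lie_def by blast

lemma eps_add_left: "eps (a + b) c = eps a c * eps b c"
  using bichar by (rule bichar_add_left)

lemma eps_add_right: "eps a (b + c) = eps a b * eps a c"
  using bichar by (rule bichar_add_right)

lemma eps_swap: "eps a b * eps b a = 1"
  using bichar by (rule bichar_swap)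

lemma G_subspace: "S.subspace (G a)"
  using lie unfolding color_hom_lie_def graded_on_def by blast

lemma G_add: "x \<in> G a \<Longrightarrow> y \<in> G a \<Longrightarrow> x + y \<in> G a"
  and G_scale: "x \<in> G a \<Longrightarrow> s c x \<in> G a"
  using G_subspace S.subspace_add S.subspace_scale by blast+

lemma br_graded: "x \<in> G a \<Longrightarrow> y \<in> G b \<Longrightarrow> br x y \<in> G (a + b)"
  and al_graded: "x \<in> G a \<Longrightarrow> al x \<in> G a"
  using lie unfolding color_hom_lie_def by blast+

lemma al_br: "al (br x y) = br (al x) (al y)"
  using mult by (simp add: multiplicative_def)

lemma B_invariant: "B (br x y) z = B x (br y z)"
  and B_al: "B (al x) y = B x (al y)"
  using quad unfolding quadratic_form_def by blast+

lemma eq_if_B_eq: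
  "z \<in> G e \<Longrightarrow> z' \<in> G e \<Longrightarrow> (\<And>r y. y \<in> G r \<Longrightarrow> B y z = B y z') \<Longrightarrow> z = z'"
  using quadratic_form_homogeneous_eqI[OF lie quad] by blast

lemma rho_linear: "rho (s c x + y) m = sM c (rho x m) + rho y m"
  and rho_graded: "x \<in> G a \<Longrightarrow> m \<in> MV b \<Longrightarrow> rho x m \<in> MV (a + b)"
  and be_graded: "m \<in> MV a \<Longrightarrow> be m \<in> MV a"
  and rho_br: "x \<in> G a \<Longrightarrow> y \<in> G b \<Longrightarrow>
     rho (br x y) (be m) = rho (al x) (rho y m) - sM (eps a b) (rho (al y) (rho x m))"
  and be_rho: "be (rho x m) = rho (al x) (be m)"
  using rep unfolding color_hom_rep_def by blast+

lemma dual_deg_linear: "f \<in> DD d \<Longrightarrow> module_hom sM (*) f"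
  by (auto simp: dual_deg_def intro: module_hom_linearI)

lemma dual_deg_gdual: "f \<in> DD d \<Longrightarrow> f \<in> GD"
  unfolding gdual_def by (rule F.span_base) blast

lemma gdual_scale: "f \<in> GD \<Longrightarrow> dscale c f \<in> GD"
  unfolding gdual_def by (rule F.span_scale)

lemma rhot_gdual: "f \<in> GD \<Longrightarrow> rhot x f \<in> GD"
  using rhot_lin unfolding lin_on_def by blast

lemma rhot_graded: "x \<in> G a \<Longrightarrow> f \<in> DD b \<Longrightarrow> rhot x f \<in> DD (a + b)"
  and comp_be_graded: "f \<in> DD a \<Longrightarrow> f \<circ> be \<in> DD a"
  and rhot_br: "x \<in> G a \<Longrightarrow> y \<in> G b \<Longrightarrow> f \<in> GD \<Longrightarrow>
     rhot (br x y) (f \<circ> be) = rhot (al x) (rhot y f) - dscale (eps a b) (rhot (al y) (rhot x f))"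
  and rhot_comp_be: "f \<in> GD \<Longrightarrow> rhot x f \<circ> be = rhot (al x) (f \<circ> be)"
  using rhot_rep unfolding color_hom_rep_def by blast+

lemma comp_be_be: "f \<circ> be \<circ> be = f"
  using be_inv by (auto simp: fun_eq_iff)

lemma tens_add_left: "f \<in> GD \<Longrightarrow> tens (m + n) f = tens m f + tens n f"
  and tens_scale_left: "f \<in> GD \<Longrightarrow> tens (sM c m) f = sT c (tens m f)"
  and tens_add_right: "f \<in> GD \<Longrightarrow> g \<in> GD \<Longrightarrow> tens m (f + g) = tens m f + tens m g"
  and tens_scale_right: "f \<in> GD \<Longrightarrow> tens m (dscale c f) = sT c (tens m f)"
  using tensor unfolding is_tensor_def lin_on_def by blast+

lemma tens_diff_left: "f \<in> GD \<Longrightarrow> tens (m - n) f = tens m f - tens n f"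
  using tens_add_left[of f "m - n" n] by (simp add: algebra_simps)

lemma tens_diff_scale_right:
  assumes f: "f \<in> GD" and g: "g \<in> GD"
  shows "tens m (f - dscale c g) = tens m f - sT c (tens m g)"
proof -
  have "f - dscale c g = f + dscale (- c) g"
    by (auto simp: fun_eq_iff dscale_def)
  then have "tens m (f - dscale c g) = tens m f + sT (- c) (tens m g)"
    by (simp only: tens_add_right[OF f gdual_scale[OF g]] tens_scale_right[OF g])
  then show ?thesis
    by (simp add: T.scale_minus_left)
qed

lemma tens_tensor_deg: "m \<in> MV a \<Longrightarrow> f \<in> DD b \<Longrightarrow> tens m f \<in> TD (a + b)"
  unfolding tensor_deg_def by (rule T.span_base) blast

lemma D_tens_graded: "m \<in> MV a \<Longrightarrow> f \<in> DD b \<Longrightarrow> D (tens m f) \<in> G (a + b)"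
  using D_even tens_tensor_deg by blast

lemma D_tens: "x \<in> G a \<Longrightarrow> m \<in> MV b \<Longrightarrow> f \<in> DD d \<Longrightarrow>
   B x (D (tens m f)) = eps (a + b) d * f (rho (al x) m)"
  using D_def by blast

lemma brT_tens: "m \<in> MV a \<Longrightarrow> f \<in> DD b \<Longrightarrow> m' \<in> MV a' \<Longrightarrow> f' \<in> DD b' \<Longrightarrow>
   brT (tens m f) (tens m' f') =
     tens (rho (D (tens m f)) m') (f' \<circ> be) + sT (eps (a + b) a') (tens (be m') (rhot (D (tens m f)) f'))"
  using brT_def by blast

lemma tau_tens: "f \<in> DD d \<Longrightarrow> tau (tens m f) = tens (be m) (f \<circ> be)"
  using tau_def dual_deg_gdual by blast

lemma D_tau_tens:
  assumes m: "m \<in> MV q" and f: "f \<in> DD d"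
  shows "D (tens (be m) (f \<circ> be)) = al (D (tens m f))"
proof (rule eq_if_B_eq)
  show "D (tens (be m) (f \<circ> be)) \<in> G (q + d)"
    using D_tens_graded[OF be_graded[OF m] comp_be_graded[OF f]] .
  show "al (D (tens m f)) \<in> G (q + d)"
    using al_graded[OF D_tens_graded[OF m f]] .
  fix r y assume y: "y \<in> G r"
  have "B y (D (tens (be m) (f \<circ> be))) = eps (r + q) d * f (be (rho (al y) (be m)))"
    using D_tens[OF y be_graded[OF m] comp_be_graded[OF f]] by simp
  also have "\<dots> = eps (r + q) d * f (rho y m)"
    using al_inv be_inv by (simp add: be_rho)
  also have "\<dots> = B (al y) (D (tens m f))"
    using D_tens[OF al_graded[OF y] m f] al_inv by simp
  also have "\<dots> = B y (al (D (tens m f)))"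
    by (rule B_al)
  finally show "B y (D (tens (be m) (f \<circ> be))) = B y (al (D (tens m f)))" .
qed

lemma B_br_D_tens:
  assumes y: "y \<in> G r" and x: "x \<in> G p" and m: "m \<in> MV q" and f: "f \<in> DD d"
  shows "B y (br x (D (tens m f))) = eps (r + p + q) d *
    (f (rho y (rho (al x) (be m))) - eps r p * f (rho x (rho (al y) (be m))))"
proof -
  have "B y (br x (D (tens m f))) = B (br y x) (D (tens m f))"
    by (simp add: B_invariant)
  also have "\<dots> = eps (r + p + q) d * f (rho (br (al y) (al x)) (be (be m)))"
    using D_tens[OF br_graded[OF y x] m f] be_inv by (simp add: al_br)
  also have "\<dots> = eps (r + p + q) d * (f (rho y (rho (al x) (be m))) - eps r p * f (rho x (rho (al y) (be m))))"
    using rho_br[OF al_graded[OF y] al_graded[OF x], of "be m"] al_inv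
    by (simp add: module_hom.diff[OF dual_deg_linear[OF f]] module_hom.scale[OF dual_deg_linear[OF f]])
  finally show ?thesis .
qed

lemma D_tens_action:
  assumes x: "x \<in> G p" and m: "m \<in> MV q" and f: "f \<in> DD d"
  shows "D (tens (rho x m) (f \<circ> be) + sT (eps p q) (tens (be m) (rhot x f))) = br x (D (tens m f))"
proof (rule eq_if_B_eq)
  have e1: "q + (p + d) = p + q + d" "p + (q + d) = p + q + d"
    by (simp_all add: ac_simps)
  have "D (tens (rho x m) (f \<circ> be)) \<in> G (p + q + d)"
    using D_tens_graded[OF rho_graded[OF x m] comp_be_graded[OF f]] .
  moreover have "D (tens (be m) (rhot x f)) \<in> G (p + q + d)"
    using D_tens_graded[OF be_graded[OF m] rhot_graded[OF x f]] e1 by simp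
  ultimately show "D (tens (rho x m) (f \<circ> be) + sT (eps p q) (tens (be m) (rhot x f))) \<in> G (p + q + d)"
    by (simp add: D.add D.scale G_add G_scale)
  show "br x (D (tens m f)) \<in> G (p + q + d)"
    using br_graded[OF x D_tens_graded[OF m f]] e1 by simp
  fix r y assume y: "y \<in> G r"
  define F1 where "F1 = f (rho y (rho (al x) (be m)))"
  define F2 where "F2 = f (rho x (rho (al y) (be m)))"
  have "B y (D (tens (rho x m) (f \<circ> be))) = eps (r + (p + q)) d * f (be (rho (al y) (rho x m)))"
    using D_tens[OF y rho_graded[OF x m] comp_be_graded[OF f]] by simp
  also have "\<dots> = eps (r + p + q) d * F1"
    using al_inv unfolding F1_def by (simp add: be_rho ac_simps)
  finally have h1: "B y (D (tens (rho x m) (f \<circ> be))) = eps (r + p + q) d * F1" .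
  have "B y (D (tens (be m) (rhot x f))) = eps (r + q) (p + d) * rhot x f (rho (al y) (be m))"
    using D_tens[OF y be_graded[OF m] rhot_graded[OF x f]] by simp
  also have "\<dots> = eps (r + q) (p + d) * (- eps p d * F2)"
    using rhot_hom x f unfolding F2_def by (simp add: dscale_def)
  finally have h2: "B y (D (tens (be m) (rhot x f))) = eps (r + q) (p + d) * (- eps p d * F2)" .
  have h3: "B y (br x (D (tens m f))) = eps (r + p + q) d * (F1 - eps r p * F2)"
    unfolding F1_def F2_def using B_br_D_tens[OF y x m f] .
  have "eps p q * (eps (r + q) (p + d) * eps p d) = eps (r + p + q) d * eps r p"
    using eps_swap[of p q] by (simp add: eps_add_left eps_add_right algebra_simps)
  then show "B y (D (tens (rho x m) (f \<circ> be) + sT (eps p q) (tens (be m) (rhot x f))))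
      = B y (br x (D (tens m f)))"
    unfolding h3 D.add D.scale B_add_right B_scale_right h1 h2 by (simp add: algebra_simps)
qed

lemma brT_tau_brT_tens:
  assumes m1: "m1 \<in> MV a1" and f1: "f1 \<in> DD b1" and m2: "m2 \<in> MV a2" and f2: "f2 \<in> DD b2"
    and m3: "m3 \<in> MV a3" and f3: "f3 \<in> DD b3"
    and X: "X = D (tens m1 f1)" and Y: "Y = D (tens m2 f2)"
  shows "brT (tau (tens m1 f1)) (brT (tens m2 f2) (tens m3 f3)) =
    tens (rho (al X) (rho Y m3)) f3
    + sT (eps (a1 + b1) (a2 + b2 + a3)) (tens (rho (al Y) (be m3)) (rhot X f3 \<circ> be))
    + sT (eps (a2 + b2) a3) (tens (rho (al X) (be m3)) (rhot Y f3 \<circ> be)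
        + sT (eps (a1 + b1) a3) (tens m3 (rhot (al X) (rhot Y f3))))"
proof -
  have Y_graded: "Y \<in> G (a2 + b2)"
    unfolding Y using D_tens_graded[OF m2 f2] .
  have tau_u: "D (tens (be m1) (f1 \<circ> be)) = al X"
    unfolding X using D_tau_tens[OF m1 f1] .
  have "brT (tens (be m1) (f1 \<circ> be)) (tens (rho Y m3) (f3 \<circ> be)) =
     tens (rho (al X) (rho Y m3)) f3
     + sT (eps (a1 + b1) (a2 + b2 + a3)) (tens (rho (al Y) (be m3)) (rhot X f3 \<circ> be))"
    using brT_tens[OF be_graded[OF m1] comp_be_graded[OF f1] rho_graded[OF Y_graded m3]
        comp_be_graded[OF f3]]
    unfolding tau_u comp_be_be be_rho rhot_comp_be[OF dual_deg_gdual[OF f3]] .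
  moreover have "brT (tens (be m1) (f1 \<circ> be)) (tens (be m3) (rhot Y f3)) =
     tens (rho (al X) (be m3)) (rhot Y f3 \<circ> be) + sT (eps (a1 + b1) a3) (tens m3 (rhot (al X) (rhot Y f3)))"
    using brT_tens[OF be_graded[OF m1] comp_be_graded[OF f1] be_graded[OF m3] rhot_graded[OF Y_graded f3]]
      be_inv
    unfolding tau_u by simp
  ultimately show ?thesis
    using brT_tens[OF m2 f2 m3 f3]
    by (simp add: tau_tens[OF f1] X Y brT_right.add brT_right.scale)
qed

lemma brT_brT_tau_tens:
  assumes m1: "m1 \<in> MV a1" and f1: "f1 \<in> DD b1" and m2: "m2 \<in> MV a2" and f2: "f2 \<in> DD b2"
    and m3: "m3 \<in> MV a3" and f3: "f3 \<in> DD b3"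
    and X: "X = D (tens m1 f1)" and Z: "Z = br X (D (tens m2 f2))"
  shows "brT (brT (tens m1 f1) (tens m2 f2)) (tau (tens m3 f3)) =
    tens (rho Z (be m3)) f3 + sT (eps (a1 + b1 + (a2 + b2)) a3) (tens m3 (rhot Z (f3 \<circ> be)))"
proof -
  have X_graded: "X \<in> G (a1 + b1)"
    unfolding X using D_tens_graded[OF m1 f1] .
  define k where "k = eps (a1 + b1) a2"
  define E where "E = eps (a1 + b1 + (a2 + b2)) a3"
  define p1 where "p1 = tens (rho X m2) (f2 \<circ> be)"
  define p2 where "p2 = tens (be m2) (rhot X f2)"
  define g where "g = f3 \<circ> be"
  have g: "g \<in> GD" and f3': "f3 \<in> GD"
    unfolding g_def using dual_deg_gdual comp_be_graded f3 by blast+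
  have uv: "brT (tens m1 f1) (tens m2 f2) = p1 + sT k p2"
    unfolding p1_def p2_def k_def X using brT_tens[OF m1 f1 m2 f2] .
  have Z_split: "Z = D p1 + s k (D p2)"
    using D_tens_action[OF X_graded m2 f2] unfolding Z p1_def p2_def k_def by (simp add: D.add D.scale)
  have "brT p1 (tens (be m3) g) = tens (rho (D p1) (be m3)) f3 + sT E (tens m3 (rhot (D p1) g))"
    using brT_tens[OF rho_graded[OF X_graded m2] comp_be_graded[OF f2] be_graded[OF m3]
        comp_be_graded[OF f3]] be_inv
    unfolding p1_def[symmetric] E_def g_def comp_be_be by (simp add: ac_simps)
  moreover have "brT p2 (tens (be m3) g) = tens (rho (D p2) (be m3)) f3 + sT E (tens m3 (rhot (D p2) g))"
    using brT_tens[OF be_graded[OF m2] rhot_graded[OF X_graded f2] be_graded[OF m3]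
        comp_be_graded[OF f3]] be_inv
    unfolding p2_def[symmetric] E_def g_def comp_be_be by (simp add: ac_simps)
  moreover have "tens (rho Z (be m3)) f3 = sT k (tens (rho (D p2) (be m3)) f3) + tens (rho (D p1) (be m3)) f3"
    using rho_linear[of k "D p2" "D p1" "be m3"]
    by (simp add: Z_split add.commute tens_add_left[OF f3'] tens_scale_left[OF f3'])
  moreover have "tens m3 (rhot Z g) = sT k (tens m3 (rhot (D p2) g)) + tens m3 (rhot (D p1) g)"
    using rhot_linx g rhot_gdual[OF g] gdual_scale
    by (simp add: Z_split add.commute tens_add_right tens_scale_right)
  ultimately show ?thesis
    unfolding uv tau_tens[OF f3] brT_left.add brT_left.scale E_def[symmetric] g_def[symmetric]
    by (simp add: T.scale_right_distrib algebra_simps)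
qed

lemma leibniz_tens:
  assumes m1: "m1 \<in> MV a1" and f1: "f1 \<in> DD b1" and m2: "m2 \<in> MV a2" and f2: "f2 \<in> DD b2"
    and m3: "m3 \<in> MV a3" and f3: "f3 \<in> DD b3"
  shows "brT (tau (tens m1 f1)) (brT (tens m2 f2) (tens m3 f3)) =
     brT (brT (tens m1 f1) (tens m2 f2)) (tau (tens m3 f3))
     + sT (eps (a1 + b1) (a2 + b2)) (brT (tau (tens m2 f2)) (brT (tens m1 f1) (tens m3 f3)))"
proof -
  define X where "X = D (tens m1 f1)"
  define Y where "Y = D (tens m2 f2)"
  define P where "P = a1 + b1"
  define Q where "Q = a2 + b2"
  have X: "X \<in> G P" and Y: "Y \<in> G Q"
    unfolding X_def Y_def P_def Q_def using D_tens_graded m1 f1 m2 f2 by blast+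
  have f3': "f3 \<in> GD"
    using dual_deg_gdual[OF f3] .
  define e where "e = eps P Q"
  define k3 where "k3 = eps P a3"
  define k6 where "k6 = eps Q (P + a3)"
  have e_k3: "eps P (Q + a3) = e * k3"
    unfolding e_def k3_def by (simp add: eps_add_right)
  have e_k6: "eps Q a3 = e * k6"
    unfolding e_def k6_def using eps_swap[of P Q] by (simp add: eps_add_right mult.assoc[symmetric])
  have e_k6_k3: "eps (P + Q) a3 = e * k6 * k3"
    unfolding e_k6[symmetric] k3_def by (simp add: eps_add_left ac_simps)
  have "brT (tau (tens m1 f1)) (brT (tens m2 f2) (tens m3 f3)) =
      tens (rho (al X) (rho Y m3)) f3 + sT (e * k3) (tens (rho (al Y) (be m3)) (rhot X f3 \<circ> be))
      + sT (e * k6) (tens (rho (al X) (be m3)) (rhot Y f3 \<circ> be) + sT k3 (tens m3 (rhot (al X) (rhot Y f3))))"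
    using brT_tau_brT_tens[OF m1 f1 m2 f2 m3 f3 X_def Y_def]
    unfolding P_def[symmetric] Q_def[symmetric] e_k3 e_k6 k3_def .
  moreover have "brT (tau (tens m2 f2)) (brT (tens m1 f1) (tens m3 f3)) =
      tens (rho (al Y) (rho X m3)) f3 + sT k6 (tens (rho (al X) (be m3)) (rhot Y f3 \<circ> be))
      + sT k3 (tens (rho (al Y) (be m3)) (rhot X f3 \<circ> be) + sT (e * k6) (tens m3 (rhot (al Y) (rhot X f3))))"
    using brT_tau_brT_tens[OF m2 f2 m1 f1 m3 f3 Y_def X_def]
    unfolding P_def[symmetric] Q_def[symmetric] e_k6 k3_def k6_def .
  moreover have "brT (brT (tens m1 f1) (tens m2 f2)) (tau (tens m3 f3)) =
      tens (rho (al X) (rho Y m3)) f3 - sT e (tens (rho (al Y) (rho X m3)) f3)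
      + sT (e * k6 * k3) (tens m3 (rhot (al X) (rhot Y f3)) - sT e (tens m3 (rhot (al Y) (rhot X f3))))"
    using brT_brT_tau_tens[OF m1 f1 m2 f2 m3 f3 X_def refl]
    unfolding Y_def[symmetric] P_def[symmetric] Q_def[symmetric] e_k6_k3 rho_br[OF X Y]
      rhot_br[OF X Y f3'] e_def[symmetric] tens_diff_left[OF f3'] tens_scale_left[OF f3']
      tens_diff_scale_right[OF rhot_gdual[OF rhot_gdual[OF f3']] rhot_gdual[OF rhot_gdual[OF f3']]] .
  ultimately show ?thesis
    unfolding P_def[symmetric] Q_def[symmetric] e_def[symmetric] by (rule T.leibniz_rearrange)
qed

lemma tensor_deg_induct [consumes 1, case_names zero combination]:
  assumes "u \<in> TD c" and "P 0"
    and "\<And>k m f a b y. a + b = c \<Longrightarrow> m \<in> MV a \<Longrightarrow> f \<in> DD b \<Longrightarrow> P y \<Longrightarrow> P (sT k (tens m f) + y)"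
  shows "P u"
  using assms(1) unfolding tensor_deg_def
  by (induct rule: T.span_induct_alt) (use assms(2,3) in blast)+

definition leibniz_at :: "'t \<Rightarrow> 't \<Rightarrow> 't \<Rightarrow> 'k \<Rightarrow> bool" where
  "leibniz_at u v w e \<longleftrightarrow> brT (tau u) (brT v w) = brT (brT u v) (tau w) + sT e (brT (tau v) (brT u w))"

lemma leibniz_at_zero: "leibniz_at 0 v w e" "leibniz_at u 0 w e" "leibniz_at u v 0 e"
  by (simp_all add: leibniz_at_def)

lemma leibniz_at_combination:
  "leibniz_at u v w e \<Longrightarrow> leibniz_at u' v w e \<Longrightarrow> leibniz_at (sT c u + u') v w e"
  "leibniz_at u v w e \<Longrightarrow> leibniz_at u v' w e \<Longrightarrow> leibniz_at u (sT c v + v') w e"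
  "leibniz_at u v w e \<Longrightarrow> leibniz_at u v w' e \<Longrightarrow> leibniz_at u v (sT c w + w') e"
  by (simp_all add: leibniz_at_def tau.add tau.scale brT_left.add brT_left.scale brT_right.add
      brT_right.scale T.scale_right_distrib algebra_simps)

lemma leibniz_at_tens_tens:
  assumes m1: "m1 \<in> MV a1" and f1: "f1 \<in> DD b1" and m2: "m2 \<in> MV a2" and f2: "f2 \<in> DD b2"
    and w: "w \<in> TD c"
  shows "leibniz_at (tens m1 f1) (tens m2 f2) w (eps (a1 + b1) (a2 + b2))"
  using w
proof (induct rule: tensor_deg_induct)
  case (combination k m f a b y)
  then show ?case
    using leibniz_tens[OF m1 f1 m2 f2 combination(2,3)]
    by (intro leibniz_at_combination(3)) (simp_all add: leibniz_at_def)
qed (rule leibniz_at_zero)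

lemma leibniz_at_tens:
  assumes m1: "m1 \<in> MV a1" and f1: "f1 \<in> DD b1" and v: "v \<in> TD b" and w: "w \<in> TD c"
  shows "leibniz_at (tens m1 f1) v w (eps (a1 + b1) b)"
  using v
proof (induct rule: tensor_deg_induct)
  case (combination k m f a2 b2 y)
  then show ?case
    using leibniz_at_tens_tens[OF m1 f1 combination(2,3) w]
    by (intro leibniz_at_combination(2)) simp_all
qed (rule leibniz_at_zero)

lemma leibniz_at_tensor_deg:
  assumes u: "u \<in> TD a" and v: "v \<in> TD b" and w: "w \<in> TD c"
  shows "leibniz_at u v w (eps a b)"
  using u
proof (induct rule: tensor_deg_induct)
  case (combination k m f a1 b1 y)
  then show ?case
    using leibniz_at_tens[OF combination(2,3) v w]
    by (intro leibniz_at_combination(1)) simp_all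
qed (rule leibniz_at_zero)

end

theorem mainTheorem14:
  fixes s :: "'k::field_char_0 \<Rightarrow> 'g::ab_group_add \<Rightarrow> 'g"
    and G :: "'c::ab_group_add \<Rightarrow> 'g set"
    and br :: "'g \<Rightarrow> 'g \<Rightarrow> 'g" and al :: "'g \<Rightarrow> 'g"
    and eps :: "'c \<Rightarrow> 'c \<Rightarrow> 'k" and B :: "'g \<Rightarrow> 'g \<Rightarrow> 'k"
    and sM :: "'k \<Rightarrow> 'm::ab_group_add \<Rightarrow> 'm" and MV :: "'c \<Rightarrow> 'm set"
    and rho :: "'g \<Rightarrow> 'm \<Rightarrow> 'm" and be :: "'m \<Rightarrow> 'm"
    and rhot :: "'g \<Rightarrow> ('m \<Rightarrow> 'k) \<Rightarrow> ('m \<Rightarrow> 'k)"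
    and sT :: "'k \<Rightarrow> 't::ab_group_add \<Rightarrow> 't" and tens :: "'m \<Rightarrow> ('m \<Rightarrow> 'k) \<Rightarrow> 't"
    and D :: "'t \<Rightarrow> 'g" and brT :: "'t \<Rightarrow> 't \<Rightarrow> 't" and tau :: "'t \<Rightarrow> 't"
  assumes lie: "color_hom_lie s G br al eps"
    and mult: "multiplicative br al"
    and quad: "quadratic_form s G br al eps B"
    and Mgr: "graded_on sM UNIV MV"
    and rep: "color_hom_rep s G br al eps sM UNIV MV rho be"
    and faithful: "inj rho"
    and al_inv: "\<forall>x. al (al x) = x"
    and be_inv: "\<forall>m. be (be m) = m"
    and rhot_hom: "\<forall>a d. \<forall>x\<in>G a. \<forall>f\<in>dual_deg sM MV d.
                     rhot x f = dscale (- eps a d) (f \<circ> rho x)"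
    and rhot_lin: "\<forall>x. lin_on dscale (gdual sM MV) dscale (gdual sM MV) (rhot x)"
    and rhot_linx: "\<forall>c x y. \<forall>f\<in>gdual sM MV. rhot (s c x + y) f = dscale c (rhot x f) + rhot y f"
    and rhot_rep: "color_hom_rep s G br al eps dscale (gdual sM MV) (dual_deg sM MV) rhot (\<lambda>f. f \<circ> be)"
    and tensor: "is_tensor sM UNIV dscale (gdual sM MV) sT tens"
    and D_lin: "Vector_Spaces.linear sT s D"
    and D_even: "\<forall>c. \<forall>u\<in>tensor_deg sM MV sT tens c. D u \<in> G c"
    and D_def: "\<forall>a b d. \<forall>x\<in>G a. \<forall>m\<in>MV b. \<forall>f\<in>dual_deg sM MV d.
                  B x (D (tens m f)) = eps (a + b) d * f (rho (al x) m)"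
    and brT_lin1: "\<forall>v. Vector_Spaces.linear sT sT (\<lambda>u. brT u v)"
    and brT_lin2: "\<forall>u. Vector_Spaces.linear sT sT (brT u)"
    and brT_def: "\<forall>a b a' b'. \<forall>m\<in>MV a. \<forall>f\<in>dual_deg sM MV b. \<forall>m'\<in>MV a'. \<forall>f'\<in>dual_deg sM MV b'.
                   brT (tens m f) (tens m' f') =
                     tens (rho (D (tens m f)) m') (f' \<circ> be)
                     + sT (eps (a + b) a') (tens (be m') (rhot (D (tens m f)) f'))"
    and tau_lin: "Vector_Spaces.linear sT sT tau"
    and tau_def: "\<forall>m. \<forall>f\<in>gdual sM MV. tau (tens m f) = tens (be m) (f \<circ> be)"
  shows "\<forall>a b c. \<forall>u\<in>tensor_deg sM MV sT tens a. \<forall>v\<in>tensor_deg sM MV sT tens b.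
           \<forall>w\<in>tensor_deg sM MV sT tens c.
             brT (tau u) (brT v w) = brT (brT u v) (tau w) + sT (eps a b) (brT (tau v) (brT u w))"
proof -
  interpret tensor_hom_leibniz s G br al eps B sM MV rho be rhot sT tens D brT tau
    using lie mult quad rep al_inv be_inv rhot_hom rhot_lin rhot_linx rhot_rep tensor D_lin D_even
      D_def brT_lin1 brT_lin2 brT_def tau_lin tau_def
    by (rule tensor_hom_leibniz.intro)
  show ?thesis
    using leibniz_at_tensor_deg unfolding leibniz_at_def by blast
qed

end
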